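(* Let $(E,\tau)$ be a uniquely generated violator space. Then each equivalence class of the relation $X\sim Y\iff\tau(X)=\tau(Y)$ on $2^E$ is closed under intersection and under union: if $\tau(X)=\tau(Y)$ then $\tau(X\cap Y)=\tau(X\cup Y)=\tau(X)$.
   Context: $E$ is a finite set and $\tau:2^E\to 2^E$. $(E,\tau)$ is a violator space if (C1) $Z\subseteq\tau(Z)$ for all $Z\subseteq E$, and (C22) for all $F,G\subseteq E$, $F\subseteq G\subseteq\tau(F)$ implies $\tau(G)=\tau(F)$. For $X\subseteq E$, a generator of $X$ is any $B\subseteq E$ with $\tau(B)=\tau(X)$; a basis of $X$ is an inclusion-minimal generator of $X$. The space is uniquely generated if every $X\subseteq E$ has exactly one basis. *)

theory Defs
  imports Main
begin

text \<open>A violator space (E, tau): E finite, tau maps subsets of E to subsets of E,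
  (C1) extensivity and (C22) the consistency/locality axiom.\<close>
definition violator_space :: "'a set \<Rightarrow> ('a set \<Rightarrow> 'a set) \<Rightarrow> bool" where
  "violator_space E tau \<longleftrightarrow> finite E
     \<and> (\<forall>Z. Z \<subseteq> E \<longrightarrow> tau Z \<subseteq> E)
     \<and> (\<forall>Z. Z \<subseteq> E \<longrightarrow> Z \<subseteq> tau Z)
     \<and> (\<forall>F G. F \<subseteq> E \<longrightarrow> G \<subseteq> E \<longrightarrow> F \<subseteq> G \<longrightarrow> G \<subseteq> tau F \<longrightarrow> tau G = tau F)"

definition generator :: "'a set \<Rightarrow> ('a set \<Rightarrow> 'a set) \<Rightarrow> 'a set \<Rightarrow> 'a set \<Rightarrow> bool" where
  "generator E tau X B \<longleftrightarrow> B \<subseteq> E \<and> tau B = tau X"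

definition basis :: "'a set \<Rightarrow> ('a set \<Rightarrow> 'a set) \<Rightarrow> 'a set \<Rightarrow> 'a set \<Rightarrow> bool" where
  "basis E tau X B \<longleftrightarrow> generator E tau X B \<and> (\<forall>B'. B' \<subset> B \<longrightarrow> \<not> generator E tau X B')"

definition uniquely_generated :: "'a set \<Rightarrow> ('a set \<Rightarrow> 'a set) \<Rightarrow> bool" where
  "uniquely_generated E tau \<longleftrightarrow> (\<forall>X. X \<subseteq> E \<longrightarrow> (\<exists>!B. basis E tau X B))"

end

theory Submission
  imports Defs
begin

text \<open>Every generator of X contains a basis of X. Under unique generation the bases found
  inside X and inside Y coincide, so X \<inter> Y contains a generator B of X; since
  B \<subseteq> X \<inter> Y \<subseteq> tau B, axiom C22 gives tau (X \<inter> Y) = tau X. The union needs no unique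
  generation: X \<subseteq> X \<union> Y \<subseteq> tau X because tau X = tau Y.\<close>

lemma violator_space_subset_tau:
  "violator_space E tau \<Longrightarrow> Z \<subseteq> E \<Longrightarrow> Z \<subseteq> tau Z"
  unfolding violator_space_def by blast

lemma violator_space_tau_eq:
  assumes "violator_space E tau" and "G \<subseteq> E" and "F \<subseteq> G" and "G \<subseteq> tau F"
  shows "tau G = tau F"
proof -
  have "F \<subseteq> E"
    using assms(2,3) by (rule order_trans[rotated])
  moreover have "\<forall>F G. F \<subseteq> E \<longrightarrow> G \<subseteq> E \<longrightarrow> F \<subseteq> G \<longrightarrow> G \<subseteq> tau F \<longrightarrow> tau G = tau F"
    using assms(1) unfolding violator_space_def by (elim conjE)
  ultimately show ?thesis
    using assms(2-4) by blast
qed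

lemma violator_space_tau_sandwich:
  assumes "violator_space E tau" and "X \<subseteq> E" and "B \<subseteq> Z" and "Z \<subseteq> X" and "tau B = tau X"
  shows "tau Z = tau X"
proof -
  have "Z \<subseteq> tau B"
    using violator_space_subset_tau[OF assms(1,2)] assms(4,5) by blast
  then have "tau Z = tau B"
    using assms(2-4) violator_space_tau_eq[OF assms(1), of Z B] by blast
  with \<open>tau B = tau X\<close> show ?thesis by simp
qed

lemma violator_space_tau_Un:
  assumes "violator_space E tau" and "X \<subseteq> E" and "Y \<subseteq> E" and "tau X = tau Y"
  shows "tau (X \<union> Y) = tau X"
proof -
  have "X \<union> Y \<subseteq> tau X"
    using violator_space_subset_tau[OF assms(1,2)] violator_space_subset_tau[OF assms(1,3)] assms(4)
    by blast
  moreover have "X \<union> Y \<subseteq> E"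
    using assms(2,3) by (rule Un_least)
  ultimately show ?thesis
    using violator_space_tau_eq[OF assms(1), of "X \<union> Y" X] by blast
qed

lemma generator_contains_basis:
  "finite S \<Longrightarrow> generator E tau X S \<Longrightarrow> \<exists>B\<subseteq>S. basis E tau X B"
proof (induction S rule: finite_psubset_induct)
  case (psubset S)
  show ?case
  proof (cases "basis E tau X S")
    case True
    then show ?thesis by blast
  next
    case False
    then obtain S' where "S' \<subset> S" and "generator E tau X S'"
      using psubset.prems unfolding basis_def by blast
    then obtain B where "B \<subseteq> S'" and "basis E tau X B"
      using psubset.IH by blast
    with \<open>S' \<subset> S\<close> show ?thesis by blast
  qed
qed

lemma uniquely_generated_basis_subset_generator:
  assumes "violator_space E tau" and "uniquely_generated E tau" and "X \<subseteq> E"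
    and "basis E tau X B" and "generator E tau X S"
  shows "B \<subseteq> S"
proof -
  have "finite E"
    using assms(1) unfolding violator_space_def by (rule conjunct1)
  moreover have "S \<subseteq> E"
    using assms(5) unfolding generator_def by (rule conjunct1)
  ultimately have "finite S"
    by (rule finite_subset[rotated])
  then obtain B' where "B' \<subseteq> S" and "basis E tau X B'"
    using generator_contains_basis[OF _ assms(5)] by blast
  moreover have "\<exists>!B. basis E tau X B"
    using assms(2,3) unfolding uniquely_generated_def by simp
  then have "B' = B"
    using \<open>basis E tau X B'\<close> assms(4) by auto
  ultimately show ?thesis
    by simp
qed

theorem mainTheorem17:
  fixes E :: "'a set" and tau :: "'a set \<Rightarrow> 'a set"
  assumes "violator_space E tau" and "uniquely_generated E tau"
    and "X \<subseteq> E" and "Y \<subseteq> E" and "tau X = tau Y"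
  shows "tau (X \<inter> Y) = tau X \<and> tau (X \<union> Y) = tau X"
proof
  obtain B where B: "basis E tau X B"
    using assms(2,3) unfolding uniquely_generated_def by blast
  have "generator E tau X X" and "generator E tau X Y"
    using assms(3,4,5) by (simp_all add: generator_def)
  then have "B \<subseteq> X \<inter> Y"
    using uniquely_generated_basis_subset_generator[OF assms(1-3) B] by blast
  moreover have "tau B = tau X"
    using B by (simp add: basis_def generator_def)
  ultimately show "tau (X \<inter> Y) = tau X"
    using violator_space_tau_sandwich[OF assms(1,3)] by blast
  show "tau (X \<union> Y) = tau X"
    using violator_space_tau_Un[OF assms(1,3,4,5)] .
qed

end
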